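(* Let $n\ge1$. For every $\mathbf t\in\Delta_{n-1}$ and every vertex $x\in U_n\cup V_n$, the matrix $\rho_{\mathbf t}(p_x)\in M_{U_n}$ is in $\mathbf t$-block diagonal form.
   Context: For $n\ge1$, identify integers $0\le i<2^n$ with their $n$-digit binary representations $i=\sum_k i_k2^k$; $\mathrm{par}_k(i)=\sum_{r=0}^k i_r\bmod2$, and $i\#k$ is $i$ with its $k$-th digit flipped. The hypercube $Q_n$ has vertex classes $U_n=\{i<2^n\mid\mathrm{par}_{n-1}(i)=0\}$, $V_n=\{j<2^n\mid\mathrm{par}_{n-1}(j)=1\}$, with $i\in U_n$, $j\in V_n$ adjacent iff $j=i\#k$ for some $k<n$. $C^\ast(Q_n)$ is the universal unital C*-algebra generated by projections $p_x$ with $\sum_{u\in U_n}p_u=1=\sum_{v\in V_n}p_v$ and $p_up_v=0$ for non-adjacent $u,v$. $\Delta_{n-1}=\{[t_0,\dots,t_{n-1}]\mid t_k\ge0,\sum t_k=1\}$. For $\mathbf t\in\Delta_{n-1}$: $c_{\mathbf t}(ij)=(-1)^{\mathrm{par}_k(i)}\sqrt{t_k}$ for $i\in U_n$, $j=i\#k$ (and $0$ for non-adjacent $i,j$); $\rho_{\mathbf t}:C^\ast(Q_n)\to M_{U_n}$ is the representation with $\rho_{\mathbf t}(p_i)=E_{ii}$ ($i\in U_n$) and $\rho_{\mathbf t}(p_j)=[c_{\mathbf t}(i_1j)\overline{c_{\mathbf t}(i_2j)}]_{i_1,i_2\in U_n}$ ($j\in V_n$). $Q_n(\mathbf t)$ is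 the graph obtained from $Q_n$ by deleting all edges $ij$ with $j=i\#k$ and $t_k=0$; a matrix $A\in M_{U_n}$ is in $\mathbf t$-block diagonal form if $A_{i_1i_2}=0$ whenever $i_1,i_2$ lie in distinct connected components of $Q_n(\mathbf t)$. *)

theory Defs
  imports Complex_Main
begin

definition digit :: "nat \<Rightarrow> nat \<Rightarrow> nat" where
  "digit i k = i div 2 ^ k mod 2"

definition par :: "nat \<Rightarrow> nat \<Rightarrow> nat" where
  "par k i = (\<Sum>r\<le>k. digit i r) mod 2"

definition flip :: "nat \<Rightarrow> nat \<Rightarrow> nat" where
  "flip i k = (if digit i k = 1 then i - 2 ^ k else i + 2 ^ k)"

definition U :: "nat \<Rightarrow> nat set" where
  "U n = {i. i < 2 ^ n \<and> par (n - 1) i = 0}"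

definition V :: "nat \<Rightarrow> nat set" where
  "V n = {j. j < 2 ^ n \<and> par (n - 1) j = 1}"

text \<open>The simplex Delta_{n-1}, parameters t_0..t_{n-1} as a function on indices < n.\<close>

definition simplex :: "nat \<Rightarrow> (nat \<Rightarrow> real) set" where
  "simplex n = {t. (\<forall>k<n. 0 \<le> t k) \<and> (\<Sum>k<n. t k) = 1}"

definition coef :: "nat \<Rightarrow> (nat \<Rightarrow> real) \<Rightarrow> nat \<Rightarrow> nat \<Rightarrow> complex" where
  "coef n t i j =
     (if i \<in> U n \<and> j \<in> V n \<and> (\<exists>k<n. j = flip i k)
      then (let k = (THE k. k < n \<and> j = flip i k)
            in complex_of_real ((-1) ^ par k i * sqrt (t k)))
      else 0)"

text \<open>Matrices in M_{U_n} are functions nat => nat => complex; only entries indexed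
  by U_n x U_n are meaningful.  rho_t(p_x) for a vertex x.\<close>

definition rho :: "nat \<Rightarrow> (nat \<Rightarrow> real) \<Rightarrow> nat \<Rightarrow> nat \<Rightarrow> nat \<Rightarrow> complex" where
  "rho n t x =
     (if x \<in> U n then (\<lambda>i1 i2. if i1 = x \<and> i2 = x then 1 else 0)
      else (\<lambda>i1 i2. coef n t i1 x * cnj (coef n t i2 x)))"

definition edges_t :: "nat \<Rightarrow> (nat \<Rightarrow> real) \<Rightarrow> (nat \<times> nat) set" where
  "edges_t n t = {(a, b). (a \<in> U n \<and> b \<in> V n \<and> (\<exists>k<n. b = flip a k \<and> t k \<noteq> 0))
                        \<or> (b \<in> U n \<and> a \<in> V n \<and> (\<exists>k<n. a = flip b k \<and> t k \<noteq> 0))}"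

definition same_component :: "nat \<Rightarrow> (nat \<Rightarrow> real) \<Rightarrow> nat \<Rightarrow> nat \<Rightarrow> bool" where
  "same_component n t a b \<longleftrightarrow> (a, b) \<in> (edges_t n t)\<^sup>*"

definition block_diag :: "nat \<Rightarrow> (nat \<Rightarrow> real) \<Rightarrow> (nat \<Rightarrow> nat \<Rightarrow> complex) \<Rightarrow> bool" where
  "block_diag n t A \<longleftrightarrow>
     (\<forall>i1\<in>U n. \<forall>i2\<in>U n. \<not> same_component n t i1 i2 \<longrightarrow> A i1 i2 = 0)"

end

theory Submission
  imports Defs
begin

text \<open>For \<open>x \<in> U\<^sub>n\<close> the matrix \<open>\<rho>\<^sub>t(p\<^sub>x)\<close> is the matrix unit \<open>E\<^sub>x\<^sub>x\<close>; for \<open>x \<in> V\<^sub>n\<close> it is the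
  rank-one matrix \<open>c c\<^sup>*\<close> built from the column \<open>c = c\<^sub>t(\<cdot> x)\<close>, and \<open>c\<^sub>t(i x) \<noteq> 0\<close> only when
  \<open>i x\<close> is an edge of \<open>Q\<^sub>n(t)\<close>. So a nonzero entry \<open>(i\<^sub>1, i\<^sub>2)\<close> comes with the path
  \<open>i\<^sub>1 \<midarrow> x \<midarrow> i\<^sub>2\<close> and never leaves a connected component.\<close>

lemma digit_eq_1_imp_le: "digit i k = 1 \<Longrightarrow> 2 ^ k \<le> i"
  unfolding digit_def by (metis div_eq_0_iff mod_0 not_less zero_neq_one)

lemma flip_eq_flip_iff: "flip i k = flip i k' \<longleftrightarrow> k = k'"
proof
  assume eq: "flip i k = flip i k'"
  have "(2::nat) ^ k = 2 ^ k'"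
    using eq digit_eq_1_imp_le[of i k] digit_eq_1_imp_le[of i k']
    unfolding flip_def by (auto split: if_splits simp del: power_inject_exp)
  then show "k = k'" by simp
qed simp

lemma coef_flip:
  assumes "i \<in> U n" and "flip i k \<in> V n" and "k < n"
  shows "coef n t i (flip i k) = complex_of_real ((-1) ^ par k i * sqrt (t k))"
proof -
  have "(THE k'. k' < n \<and> flip i k = flip i k') = k"
    using \<open>k < n\<close> by (auto intro!: the_equality simp: flip_eq_flip_iff)
  then show ?thesis
    using assms unfolding coef_def by auto
qed

lemma edge_if_coef_nonzero:
  assumes "coef n t i j \<noteq> 0"
  shows "(i, j) \<in> edges_t n t"
proof -
  obtain k where "i \<in> U n" "j \<in> V n" "k < n" "j = flip i k"
    using assms unfolding coef_def by (auto split: if_splits)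
  moreover from this assms have "t k \<noteq> 0"
    by (auto simp: coef_flip)
  ultimately show ?thesis
    unfolding edges_t_def by auto
qed

lemma edges_t_sym: "(a, b) \<in> edges_t n t \<Longrightarrow> (b, a) \<in> edges_t n t"
  unfolding edges_t_def by auto

lemma same_component_if_rho_nonzero:
  assumes "rho n t x i1 i2 \<noteq> 0"
  shows "same_component n t i1 i2"
proof (cases "x \<in> U n")
  case True
  with assms show ?thesis
    unfolding rho_def same_component_def by (auto split: if_splits)
next
  case False
  with assms have "coef n t i1 x \<noteq> 0" and "coef n t i2 x \<noteq> 0"
    unfolding rho_def by auto
  then have "(i1, x) \<in> edges_t n t" and "(x, i2) \<in> edges_t n t"
    by (auto intro: edge_if_coef_nonzero edges_t_sym)
  then show ?thesis
    unfolding same_component_def by (meson converse_rtrancl_into_rtrancl r_into_rtrancl)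
qed

theorem lemma6p3:
  fixes n :: nat and t :: "nat \<Rightarrow> real" and x :: nat
  assumes "1 \<le> n" and "t \<in> simplex n" and "x \<in> U n \<union> V n"
  shows "block_diag n t (rho n t x)"
  unfolding block_diag_def using same_component_if_rho_nonzero by blast

end
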